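(* Let $G$ be a finite connected graph with a real structure and let $G'$ be a connected component of $G(\mathbb R)$. Then $\deg(K_G|_{G'})=\sum_{v\in V(G')}K_G(v)$ is even, where $K_G=\sum_{v\in V(G)}(\operatorname{val}(v)-2)v$.
   Context: A finite graph $G$ has vertex set $V(G)$, edge set $E(G)$ and incidence function $\psi$ assigning to each edge a set of one or two vertices (loops and multiple edges allowed). $\operatorname{val}(v)$ denotes the valence (degree) of $v$ in $G$: the number of edges incident to $v$, each loop at $v$ counted twice. A real structure on $G$ is a pair of involutions of $V(G)$ and $E(G)$, written $v\mapsto\overline v$, $e\mapsto\overline e$, with $\psi(\overline e)=\overline{\psi(e)}$. A vertex/edge is real if fixed; a real edge is non-isolated if all its ends are real vertices. $G(\mathbb R)$ is the subgraph whose vertices are the real vertices and whose edges are the non-isolated real edges. *)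

theory Defs
  imports Main
begin

definition finite_graph :: "'v set \<Rightarrow> 'e set \<Rightarrow> ('e \<Rightarrow> 'v set) \<Rightarrow> bool" where
  "finite_graph V E psi \<longleftrightarrow> finite V \<and> finite E \<and>
     (\<forall>e\<in>E. psi e \<subseteq> V \<and> (card (psi e) = 1 \<or> card (psi e) = 2))"

definition val :: "'e set \<Rightarrow> ('e \<Rightarrow> 'v set) \<Rightarrow> 'v \<Rightarrow> nat" where
  "val E psi v = (\<Sum>e\<in>E. if psi e = {v} then 2 else if v \<in> psi e then 1 else 0)"

definition adj :: "'v set \<Rightarrow> 'e set \<Rightarrow> ('e \<Rightarrow> 'v set) \<Rightarrow> 'v \<Rightarrow> 'v \<Rightarrow> bool" where
  "adj V E psi u w \<longleftrightarrow> u \<in> V \<and> w \<in> V \<and> (\<exists>e\<in>E. u \<in> psi e \<and> w \<in> psi e)"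

definition connected_graph :: "'v set \<Rightarrow> 'e set \<Rightarrow> ('e \<Rightarrow> 'v set) \<Rightarrow> bool" where
  "connected_graph V E psi \<longleftrightarrow> V \<noteq> {} \<and> (\<forall>u\<in>V. \<forall>w\<in>V. (adj V E psi)\<^sup>*\<^sup>* u w)"

definition real_structure ::
  "'v set \<Rightarrow> 'e set \<Rightarrow> ('e \<Rightarrow> 'v set) \<Rightarrow> ('v \<Rightarrow> 'v) \<Rightarrow> ('e \<Rightarrow> 'e) \<Rightarrow> bool" where
  "real_structure V E psi cv ce \<longleftrightarrow>
     (\<forall>v\<in>V. cv v \<in> V \<and> cv (cv v) = v) \<and>
     (\<forall>e\<in>E. ce e \<in> E \<and> ce (ce e) = e) \<and>
     (\<forall>e\<in>E. psi (ce e) = cv ` psi e)"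

definition real_vertices :: "'v set \<Rightarrow> ('v \<Rightarrow> 'v) \<Rightarrow> 'v set" where
  "real_vertices V cv = {v\<in>V. cv v = v}"

definition real_edges :: "'e set \<Rightarrow> ('e \<Rightarrow> 'v set) \<Rightarrow> ('v \<Rightarrow> 'v) \<Rightarrow> ('e \<Rightarrow> 'e) \<Rightarrow> 'e set" where
  "real_edges E psi cv ce = {e\<in>E. ce e = e \<and> (\<forall>v\<in>psi e. cv v = v)}"

definition is_component :: "'v set \<Rightarrow> 'e set \<Rightarrow> ('e \<Rightarrow> 'v set) \<Rightarrow> 'v set \<Rightarrow> bool" where
  "is_component V E psi C \<longleftrightarrow> (\<exists>v\<in>V. C = {w. (adj V E psi)\<^sup>*\<^sup>* v w})"

definition canonical_div :: "'e set \<Rightarrow> ('e \<Rightarrow> 'v set) \<Rightarrow> 'v \<Rightarrow> int" where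
  "canonical_div E psi v = int (val E psi v) - 2"

end

theory Submission
  imports Defs
begin

text \<open>By the handshake argument, the total valence of \<open>C\<close> has the parity of the number
  of edges of \<open>G\<close> with one end in \<open>C\<close> and one outside; the degree of \<open>K_G|C\<close> differs from
  it by \<open>2 |C|\<close>. Conjugation permutes these cut edges and fixes none of them: a real cut
  edge \<open>{a, b}\<close> with \<open>a \<in> C\<close> real satisfies \<open>{a, cv b} = {a, b}\<close>, so \<open>b\<close> is real too and
  the edge would be an edge of \<open>G(\<real>)\<close> leaving the component \<open>C\<close>. Hence the number of cut
  edges is even.\<close>

lemma even_card_if_fixpoint_free_involution:
  assumes "finite S" and "\<forall>x\<in>S. f x \<in> S \<and> f x \<noteq> x \<and> f (f x) = x"
  shows "even (card S)"
  using assms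
proof (induction "card S" arbitrary: S rule: less_induct)
  case less
  show ?case
  proof (cases "S = {}")
    case False
    then obtain x where x: "x \<in> S" by blast
    let ?S' = "S - {x, f x}"
    have pair: "{x, f x} \<subseteq> S" "card {x, f x} = 2"
      using less.prems x by auto
    then have card_S: "card S = card ?S' + 2"
      using card_Diff_subset[OF _ pair(1)] card_mono[OF less.prems(1) pair(1)] by simp
    have "\<forall>y\<in>?S'. f y \<in> ?S' \<and> f y \<noteq> y \<and> f (f y) = y"
      using less.prems x by (metis DiffD1 DiffD2 DiffI insertCI insertE singletonD)
    then have "even (card ?S')"
      using less.hyps card_S less.prems(1) by simp
    then show ?thesis using card_S by simp
  qed simp
qed

lemma is_component_subset:
  assumes "is_component V E psi C"
  shows "C \<subseteq> V"
proof
  fix w assume "w \<in> C"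
  with assms obtain v where "(adj V E psi)\<^sup>*\<^sup>* v w" "v \<in> V"
    unfolding is_component_def by auto
  then show "w \<in> V"
    by (induction rule: rtranclp_induct) (auto simp: adj_def)
qed

lemma is_component_edge_closed:
  assumes "is_component V E psi C" and "e \<in> E" and "psi e \<subseteq> V"
    and "w \<in> C" and "w \<in> psi e" and "u \<in> psi e"
  shows "u \<in> C"
proof -
  from assms(1) obtain v where C: "C = {x. (adj V E psi)\<^sup>*\<^sup>* v x}"
    unfolding is_component_def by auto
  have "adj V E psi w u"
    using assms unfolding adj_def by auto
  with assms(4) show ?thesis
    unfolding C by (simp add: rtranclp.rtrancl_into_rtrancl)
qed

definition cut_edges :: "'e set \<Rightarrow> ('e \<Rightarrow> 'v set) \<Rightarrow> 'v set \<Rightarrow> 'e set" where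
  "cut_edges E psi C = {e\<in>E. psi e \<inter> C \<noteq> {} \<and> psi e - C \<noteq> {}}"

lemma odd_incidences_iff_cut:
  assumes "finite C" and "card (psi e) = 1 \<or> card (psi e) = 2"
  shows "odd (\<Sum>v\<in>C. if psi e = {v} then 2 else if v \<in> psi e then 1 else 0 :: nat)
    \<longleftrightarrow> psi e \<inter> C \<noteq> {} \<and> psi e - C \<noteq> {}"
  using assms(2)
proof
  assume "card (psi e) = 1"
  then obtain a where a: "psi e = {a}" by (auto simp: card_Suc_eq)
  have "(\<Sum>v\<in>C. if psi e = {v} then 2 else if v \<in> psi e then 1 else 0 :: nat)
      = (\<Sum>v\<in>C. if a = v then 2 else 0)"
    unfolding a by (intro sum.cong) auto
  also have "\<dots> = (if a \<in> C then 2 else 0)" using assms(1) by simp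
  finally show ?thesis using a by auto
next
  assume "card (psi e) = 2"
  then obtain a b where ab: "psi e = {a, b}" "a \<noteq> b" by (auto simp: card_Suc_eq numeral_2_eq_2)
  have "(\<Sum>v\<in>C. if psi e = {v} then 2 else if v \<in> psi e then 1 else 0 :: nat)
      = (\<Sum>v\<in>C. if v \<in> {a, b} then 1 else 0)"
    unfolding ab using ab(2) by (intro sum.cong) auto
  also have "\<dots> = card (C \<inter> {a, b})"
    using sum.inter_restrict[OF assms(1), of "\<lambda>_. 1::nat" "{a, b}"] by simp
  finally show ?thesis
    using ab by (cases "a \<in> C"; cases "b \<in> C") (auto simp: Int_insert_right)
qed

lemma even_val_sum_iff_even_cut:
  assumes "finite_graph V E psi" and "finite C"
  shows "even (\<Sum>v\<in>C. val E psi v) \<longleftrightarrow> even (card (cut_edges E psi C))"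
proof -
  have finite_E: "finite E" and ends: "\<forall>e\<in>E. card (psi e) = 1 \<or> card (psi e) = 2"
    using assms(1) unfolding finite_graph_def by auto
  define incidences where
    "incidences e = (\<Sum>v\<in>C. if psi e = {v} then 2 else if v \<in> psi e then 1 else 0 :: nat)" for e
  have "(\<Sum>v\<in>C. val E psi v) = (\<Sum>e\<in>E. incidences e)"
    unfolding val_def incidences_def by (rule sum.swap)
  moreover have "odd (incidences e) \<longleftrightarrow> e \<in> cut_edges E psi C" if "e \<in> E" for e
    using odd_incidences_iff_cut[OF assms(2), of psi e] ends that
    unfolding cut_edges_def incidences_def by auto
  then have "{e\<in>E. odd (incidences e)} = cut_edges E psi C"
    unfolding cut_edges_def by auto
  ultimately show ?thesis
    using even_sum_iff[OF finite_E, of incidences] by simp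
qed

lemma conj_fixpoint_free_on_cut_edges:
  assumes graph: "finite_graph V E psi"
    and real: "real_structure V E psi cv ce"
    and comp: "is_component (real_vertices V cv) (real_edges E psi cv ce) psi C"
    and cut: "e \<in> cut_edges E psi C"
  shows "ce e \<in> cut_edges E psi C \<and> ce e \<noteq> e"
proof -
  from cut obtain a b where e: "e \<in> E" and a: "a \<in> psi e" "a \<in> C" and b: "b \<in> psi e" "b \<notin> C"
    unfolding cut_edges_def by auto
  have ends: "psi e \<subseteq> V" "card (psi e) \<le> 2" "finite (psi e)"
    using graph e finite_subset unfolding finite_graph_def by auto
  have C_real: "C \<subseteq> real_vertices V cv"
    using is_component_subset[OF comp] .
  have cv_a: "cv a = a" using a C_real by (auto simp: real_vertices_def)
  have b_V: "b \<in> V" using b ends by auto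
  have cv_b: "cv b \<in> V" "cv (cv b) = b"
    using real b_V unfolding real_structure_def by auto
  have cv_b_ne_a: "cv b \<noteq> a"
    using cv_b(2) cv_a a(2) b(2) by auto
  have psi_ce: "psi (ce e) = cv ` psi e" "ce e \<in> E"
    using real e unfolding real_structure_def by auto
  have cv_b_not_C: "cv b \<notin> C"
    using C_real cv_b b(2) by (auto simp: real_vertices_def)
  have "ce e \<in> cut_edges E psi C"
  proof -
    have "a \<in> psi (ce e) \<inter> C" "cv b \<in> psi (ce e) - C"
      using psi_ce(1) a b cv_a cv_b_not_C by (auto intro: image_eqI[of a cv a])
    then show ?thesis
      using psi_ce(2) unfolding cut_edges_def by blast
  qed
  moreover have "ce e \<noteq> e"
  proof
    assume fixed: "ce e = e"
    have "{a, b} \<subseteq> psi e" "card (psi e) \<le> card {a, b}"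
      using a b ends(2) by (auto simp: card_insert_if)
    then have psi_e: "psi e = {a, b}"
      using card_seteq[OF ends(3)] by blast
    then have "cv b = b"
      using psi_ce(1) fixed cv_a cv_b_ne_a by (auto simp: doubleton_eq_iff)
    then have "e \<in> real_edges E psi cv ce"
      using e fixed psi_e cv_a unfolding real_edges_def by auto
    moreover have "psi e \<subseteq> real_vertices V cv"
      using ends(1) psi_e cv_a \<open>cv b = b\<close> by (auto simp: real_vertices_def)
    ultimately have "b \<in> C"
      using is_component_edge_closed[OF comp _ _ a(2,1) b(1)] by blast
    with b(2) show False ..
  qed
  ultimately show ?thesis ..
qed

theorem proposition2:
  fixes V :: "'v set" and E :: "'e set" and psi :: "'e \<Rightarrow> 'v set"
    and cv :: "'v \<Rightarrow> 'v" and ce :: "'e \<Rightarrow> 'e" and C :: "'v set"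
  assumes "finite_graph V E psi"
    and "connected_graph V E psi"
    and "real_structure V E psi cv ce"
    and "is_component (real_vertices V cv) (real_edges E psi cv ce) psi C"
  shows "even (\<Sum>v\<in>C. canonical_div E psi v)"
proof -
  have finite_C: "finite C"
    using is_component_subset[OF assms(4)] assms(1)
    by (auto simp: finite_graph_def real_vertices_def intro: finite_subset)
  have "finite (cut_edges E psi C)"
    using assms(1) by (simp add: finite_graph_def cut_edges_def)
  moreover have "\<forall>e\<in>cut_edges E psi C. ce e \<in> cut_edges E psi C \<and> ce e \<noteq> e \<and> ce (ce e) = e"
    using conj_fixpoint_free_on_cut_edges[OF assms(1,3,4)] assms(3)
    by (auto simp: real_structure_def cut_edges_def)
  ultimately have "even (\<Sum>v\<in>C. val E psi v)"
    using even_val_sum_iff_even_cut[OF assms(1) finite_C]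
      even_card_if_fixpoint_free_involution by blast
  then have "even (\<Sum>v\<in>C. int (val E psi v))"
    by (metis even_of_nat_iff of_nat_sum)
  moreover have "(\<Sum>v\<in>C. canonical_div E psi v) = (\<Sum>v\<in>C. int (val E psi v)) - 2 * int (card C)"
    unfolding canonical_div_def by (simp add: sum_subtractf)
  ultimately show ?thesis by simp
qed

end
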